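(* For $k,\ell\in\mathbb Z_{\ge0}$, $$p_c^{(k-2\ell;k)}(t)=\sum_{m=0}^k\frac1{2^m}k^{\underline m}K_m(\ell;k)t^m,\qquad p_c^{(2k-\ell;\ell)}(t)=\sum_{m=0}^{\ell}\frac{(-1)^m}{2^m}\ell^{\underline m}K_m(k;\ell)t^m.$$
   Context: $r^{\underline m}=r(r-1)\cdots(r-m+1)$, $r^{\overline m}=r(r+1)\cdots(r+m-1)$. Binomial coefficients: $\binom am=a(a-1)\cdots(a-m+1)/m!$ for $m\in\mathbb Z_{\ge1}$, $\binom a0=1$, and $\binom am=0$ for negative integers $m$. Binary Krawtchouk polynomials: $K_m(x;y)=\sum_{j=0}^m(-1)^j\binom xj\binom{y-x}{m-j}$. Cayley continuants $\mathrm{Cay}_m(x;y)=\sum_{j=0}^m\binom mj(\frac{x+y}2)^{\underline j}(\frac{x-y}2)^{\overline{m-j}}$. $p_c^{(s;k)}(t)=\sum_{m=0}^k\frac1{2^m}\binom km\mathrm{Cay}_m(s;k)t^m$ for $s\in\mathbb C$, $k\in\mathbb Z_{\ge0}$. *)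

theory Defs
  imports "HOL-Analysis.Analysis"
begin

definition ffact :: "complex \<Rightarrow> nat \<Rightarrow> complex" where
  "ffact r m = (\<Prod>i<m. r - of_nat i)"

definition rfact :: "complex \<Rightarrow> nat \<Rightarrow> complex" where
  "rfact r m = (\<Prod>i<m. r + of_nat i)"

definition kraw :: "nat \<Rightarrow> complex \<Rightarrow> complex \<Rightarrow> complex" where
  "kraw m x y = (\<Sum>j=0..m. (-1)^j * (x gchoose j) * ((y - x) gchoose (m - j)))"

definition cay :: "nat \<Rightarrow> complex \<Rightarrow> complex \<Rightarrow> complex" where
  "cay m x y = (\<Sum>j=0..m. of_nat (m choose j) * ffact ((x + y) / 2) j * rfact ((x - y) / 2) (m - j))"

definition pc :: "complex \<Rightarrow> nat \<Rightarrow> complex \<Rightarrow> complex" where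
  "pc s k t = (\<Sum>m=0..k. (1 / 2^m) * of_nat (k choose m) * cay m s (of_nat k) * t^m)"

end

theory Submission
  imports Defs
begin

text \<open>Substituting s = k - 2l turns the two arguments (s + k)/2 and (s - k)/2 of the Cayley
  continuant into k - l and -l. Since a rising factorial at -l is a signed falling factorial,
  each summand of Cay_m becomes m! times a product of two binomial coefficients, so
  Cay_m(k - 2l; k) = m! K_m(l; k) after reversing the summation; multiplying by binomial(k, m)
  turns m! into the falling factorial of k. The second identity follows from the first
  because Cay_m(-x; y) = (-1)^m Cay_m(x; y).\<close>

lemma ffact_eq_fact_gchoose: "ffact r n = fact n * (r gchoose n)"
  by (simp add: ffact_def gbinomial_prod_rev atLeast0LessThan)

lemma ffact_of_nat: "ffact (of_nat n) m = of_nat (n choose m) * fact m"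
  by (simp add: ffact_eq_fact_gchoose binomial_gbinomial)

lemma rfact_uminus: "rfact (- r) n = (-1)^n * ffact r n"
proof -
  have "rfact (- r) n = (\<Prod>i<n. (-1) * (r - of_nat i))"
    unfolding rfact_def by (rule prod.cong) simp_all
  also have "\<dots> = (-1)^n * ffact r n"
    by (simp only: prod.distrib ffact_def prod_constant card_lessThan)
  finally show ?thesis .
qed

lemma ffact_uminus: "ffact (- r) n = (-1)^n * rfact r n"
  using rfact_uminus[of "- r" n] by (simp flip: power_mult_distrib)

lemma cay_uminus: "cay m (- x) y = (-1)^m * cay m x y"
proof -
  let ?a = "(x + y) / 2" and ?b = "(x - y) / 2"
  have "(- x + y) / 2 = - ?b" and "(- x - y) / 2 = - ?a"
    by (simp_all add: field_simps)
  then have "cay m (- x) y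
      = (\<Sum>j=0..m. of_nat (m choose j) * ffact (- ?b) j * rfact (- ?a) (m - j))"
    unfolding cay_def by (simp only:)
  also have "\<dots> = (\<Sum>j=0..m. (-1)^m * (of_nat (m choose (m - j)) * ffact ?a (m - j) * rfact ?b j))"
  proof (rule sum.cong [OF refl])
    fix j assume "j \<in> {0..m}"
    then have "(-1 :: complex)^j * (-1)^(m - j) = (-1)^m" and "m choose (m - j) = m choose j"
      by (simp_all flip: power_add binomial_symmetric)
    then show "of_nat (m choose j) * ffact (- ?b) j * rfact (- ?a) (m - j)
        = (-1)^m * (of_nat (m choose (m - j)) * ffact ?a (m - j) * rfact ?b j)"
      by (simp add: ffact_uminus rfact_uminus)
  qed
  also have "\<dots> = (-1)^m * cay m x y"
    unfolding cay_def sum_distrib_left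
    by (subst (2) sum.atLeastAtMost_rev) (intro sum.cong refl, auto)
  finally show ?thesis .
qed

lemma kraw_rev: "kraw m x y = (\<Sum>j=0..m. (-1)^(m - j) * ((y - x) gchoose j) * (x gchoose (m - j)))"
  unfolding kraw_def
  by (subst sum.atLeastAtMost_rev) (intro sum.cong refl, auto)

lemma cay_eq_fact_kraw: "cay m (y - 2 * x) y = fact m * kraw m x y"
proof -
  have "(y - 2 * x + y) / 2 = y - x" and "(y - 2 * x - y) / 2 = - x"
    by (simp_all add: field_simps)
  then have "cay m (y - 2 * x) y
      = (\<Sum>j=0..m. of_nat (m choose j) * ffact (y - x) j * rfact (- x) (m - j))"
    unfolding cay_def by (simp only:)
  also have "\<dots> = (\<Sum>j=0..m. fact m * ((-1)^(m - j) * ((y - x) gchoose j) * (x gchoose (m - j))))"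
  proof (rule sum.cong [OF refl])
    fix j assume "j \<in> {0..m}"
    then have "fact j * fact (m - j) * of_nat (m choose j) = (fact m :: complex)"
      by (metis atLeastAtMost_iff binomial_fact_lemma of_nat_fact of_nat_mult)
    then show "of_nat (m choose j) * ffact (y - x) j * rfact (- x) (m - j)
        = fact m * ((-1)^(m - j) * ((y - x) gchoose j) * (x gchoose (m - j)))"
      by (simp add: rfact_uminus ffact_eq_fact_gchoose flip: \<open>_ = fact m\<close>)
  qed
  also have "\<dots> = fact m * kraw m x y"
    by (simp add: kraw_rev sum_distrib_left)
  finally show ?thesis .
qed

lemma cay_reflected_eq_fact_kraw: "cay m (2 * x - y) y = (-1)^m * fact m * kraw m x y"
  using cay_uminus[of m "y - 2 * x" y] by (simp add: cay_eq_fact_kraw)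

theorem corollary7p3:
  fixes k l :: nat and t :: complex
  shows "pc (of_nat k - 2 * of_nat l) k t
           = (\<Sum>m=0..k. (1 / 2^m) * ffact (of_nat k) m * kraw m (of_nat l) (of_nat k) * t^m)
       \<and> pc (2 * of_nat k - of_nat l) l t
           = (\<Sum>m=0..l. ((-1)^m / 2^m) * ffact (of_nat l) m * kraw m (of_nat k) (of_nat l) * t^m)"
  unfolding pc_def cay_eq_fact_kraw cay_reflected_eq_fact_kraw
  by (simp add: ffact_of_nat mult_ac)

end
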